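(* Let $\mathcal{Q}$ be either the category of unital involutive quantales with unital involutive homomorphisms or the category of strong involutive quantales with strong involutive homomorphisms, and regard locales as objects of $\mathcal{Q}$. Then any colimit in $\mathcal{Q}$ of a diagram of locales is a strictly two-sided quantale.
   Context: A quantale is a complete lattice with an associative multiplication distributing over arbitrary joins in both variables; $1$ is its top. It is unital if it has a multiplicative unit $e$, strong if $1\cdot 1=1$. An involutive quantale has an involution $^*$ with $a^{**}=a$, $(a\cdot b)^*=b^*\cdot a^*$, $(\bigvee a_i)^*=\bigvee a_i^*$. Homomorphisms preserve joins and multiplication; unital ones preserve the unit, strong ones the top, involutive ones the involution. A locale (frame) is regarded as a unital involutive quantale with multiplication $\wedge$, unit the top and trivial involution; locale homomorphisms are exactly the unital (equivalently strong) quantale homomorphisms between locales. A strictly two-sided quantale is a unital quantale whose unit is its top. *)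

theory Defs
  imports Main
begin

text \<open>Only the behaviour of the operations on the carrier matters.\<close>

record 'a qstruct =
  qcar  :: "'a set"
  qle   :: "'a \<Rightarrow> 'a \<Rightarrow> bool"
  qmul  :: "'a \<Rightarrow> 'a \<Rightarrow> 'a"
  qunit :: 'a
  qinv  :: "'a \<Rightarrow> 'a"

definition qorder :: "'a qstruct \<Rightarrow> bool" where
  "qorder Q \<longleftrightarrow>
     (\<forall>a\<in>qcar Q. qle Q a a) \<and>
     (\<forall>a\<in>qcar Q. \<forall>b\<in>qcar Q. qle Q a b \<and> qle Q b a \<longrightarrow> a = b) \<and>
     (\<forall>a\<in>qcar Q. \<forall>b\<in>qcar Q. \<forall>c\<in>qcar Q. qle Q a b \<and> qle Q b c \<longrightarrow> qle Q a c)"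

definition is_lub :: "'a qstruct \<Rightarrow> 'a set \<Rightarrow> 'a \<Rightarrow> bool" where
  "is_lub Q A x \<longleftrightarrow> x \<in> qcar Q \<and> (\<forall>a\<in>A. qle Q a x) \<and>
     (\<forall>y\<in>qcar Q. (\<forall>a\<in>A. qle Q a y) \<longrightarrow> qle Q x y)"

definition is_glb :: "'a qstruct \<Rightarrow> 'a set \<Rightarrow> 'a \<Rightarrow> bool" where
  "is_glb Q A x \<longleftrightarrow> x \<in> qcar Q \<and> (\<forall>a\<in>A. qle Q x a) \<and>
     (\<forall>y\<in>qcar Q. (\<forall>a\<in>A. qle Q y a) \<longrightarrow> qle Q y x)"

definition qSup :: "'a qstruct \<Rightarrow> 'a set \<Rightarrow> 'a" where
  "qSup Q A = (THE x. is_lub Q A x)"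

definition qtop :: "'a qstruct \<Rightarrow> 'a" where
  "qtop Q = qSup Q (qcar Q)"

definition complete_lat :: "'a qstruct \<Rightarrow> bool" where
  "complete_lat Q \<longleftrightarrow> qorder Q \<and> (\<forall>A \<subseteq> qcar Q. \<exists>x. is_lub Q A x)"

definition quantale :: "'a qstruct \<Rightarrow> bool" where
  "quantale Q \<longleftrightarrow> complete_lat Q \<and>
     (\<forall>a\<in>qcar Q. \<forall>b\<in>qcar Q. qmul Q a b \<in> qcar Q) \<and>
     (\<forall>a\<in>qcar Q. \<forall>b\<in>qcar Q. \<forall>c\<in>qcar Q. qmul Q (qmul Q a b) c = qmul Q a (qmul Q b c)) \<and>
     (\<forall>a\<in>qcar Q. \<forall>B \<subseteq> qcar Q.
        qmul Q a (qSup Q B) = qSup Q ((\<lambda>b. qmul Q a b) ` B) \<and>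
        qmul Q (qSup Q B) a = qSup Q ((\<lambda>b. qmul Q b a) ` B))"

definition involutive_quantale :: "'a qstruct \<Rightarrow> bool" where
  "involutive_quantale Q \<longleftrightarrow> quantale Q \<and>
     (\<forall>a\<in>qcar Q. qinv Q a \<in> qcar Q \<and> qinv Q (qinv Q a) = a) \<and>
     (\<forall>a\<in>qcar Q. \<forall>b\<in>qcar Q. qinv Q (qmul Q a b) = qmul Q (qinv Q b) (qinv Q a)) \<and>
     (\<forall>A \<subseteq> qcar Q. qinv Q (qSup Q A) = qSup Q (qinv Q ` A))"

definition is_unit_elem :: "'a qstruct \<Rightarrow> 'a \<Rightarrow> bool" where
  "is_unit_elem Q e \<longleftrightarrow> e \<in> qcar Q \<and> (\<forall>a\<in>qcar Q. qmul Q e a = a \<and> qmul Q a e = a)"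

definition unital :: "'a qstruct \<Rightarrow> bool" where
  "unital Q \<longleftrightarrow> is_unit_elem Q (qunit Q)"

definition strong :: "'a qstruct \<Rightarrow> bool" where
  "strong Q \<longleftrightarrow> qmul Q (qtop Q) (qtop Q) = qtop Q"

definition strictly_two_sided :: "'a qstruct \<Rightarrow> bool" where
  "strictly_two_sided Q \<longleftrightarrow> quantale Q \<and> is_unit_elem Q (qtop Q)"

definition is_locale :: "'a qstruct \<Rightarrow> bool" where
  "is_locale L \<longleftrightarrow> involutive_quantale L \<and>
     (\<forall>a\<in>qcar L. \<forall>b\<in>qcar L. is_glb L {a, b} (qmul L a b)) \<and>
     qunit L = qtop L \<and>
     (\<forall>a\<in>qcar L. qinv L a = a)"

datatype qcat = UnitalInvQ | StrongInvQ

definition qobj :: "qcat \<Rightarrow> 'a qstruct \<Rightarrow> bool" where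
  "qobj K Q \<longleftrightarrow> involutive_quantale Q \<and>
     (case K of UnitalInvQ \<Rightarrow> unital Q | StrongInvQ \<Rightarrow> strong Q)"

definition qhom :: "qcat \<Rightarrow> 'a qstruct \<Rightarrow> 'b qstruct \<Rightarrow> ('a \<Rightarrow> 'b) \<Rightarrow> bool" where
  "qhom K Q R f \<longleftrightarrow> f ` qcar Q \<subseteq> qcar R \<and>
     (\<forall>A \<subseteq> qcar Q. f (qSup Q A) = qSup R (f ` A)) \<and>
     (\<forall>a\<in>qcar Q. \<forall>b\<in>qcar Q. f (qmul Q a b) = qmul R (f a) (f b)) \<and>
     (\<forall>a\<in>qcar Q. f (qinv Q a) = qinv R (f a)) \<and>
     (case K of UnitalInvQ \<Rightarrow> f (qunit Q) = qunit R
              | StrongInvQ \<Rightarrow> f (qtop Q) = qtop R)"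

text \<open>A diagram in the category K: a set of vertices I with objects D i, and a set M
of arrows (i, j, f) with f a K-morphism D i \<rightarrow> D j.  (Colimits of a functor from a
small category coincide with colimits of its underlying graph diagram.)
A diagram of locales: every D i is a locale.\<close>
definition locale_diagram ::
  "qcat \<Rightarrow> 'i set \<Rightarrow> ('i \<Rightarrow> 'a qstruct) \<Rightarrow> ('i \<times> 'i \<times> ('a \<Rightarrow> 'a)) set \<Rightarrow> bool" where
  "locale_diagram K I D M \<longleftrightarrow> (\<forall>i\<in>I. is_locale (D i)) \<and>
     (\<forall>(i, j, f)\<in>M. i \<in> I \<and> j \<in> I \<and> qhom K (D i) (D j) f)"

definition cocone ::
  "qcat \<Rightarrow> 'i set \<Rightarrow> ('i \<Rightarrow> 'a qstruct) \<Rightarrow> ('i \<times> 'i \<times> ('a \<Rightarrow> 'a)) set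
     \<Rightarrow> 'c qstruct \<Rightarrow> ('i \<Rightarrow> 'a \<Rightarrow> 'c) \<Rightarrow> bool" where
  "cocone K I D M C lam \<longleftrightarrow> qobj K C \<and>
     (\<forall>i\<in>I. qhom K (D i) C (lam i)) \<and>
     (\<forall>(i, j, f)\<in>M. \<forall>x\<in>qcar (D i). lam j (f x) = lam i x)"

text \<open>Competing cocones are taken with vertex
in the same ambient type as the colimit vertex.\<close>
definition is_colimit ::
  "qcat \<Rightarrow> 'i set \<Rightarrow> ('i \<Rightarrow> 'a qstruct) \<Rightarrow> ('i \<times> 'i \<times> ('a \<Rightarrow> 'a)) set
     \<Rightarrow> 'c qstruct \<Rightarrow> ('i \<Rightarrow> 'a \<Rightarrow> 'c) \<Rightarrow> bool" where
  "is_colimit K I D M C lam \<longleftrightarrow> cocone K I D M C lam \<and>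
     (\<forall>(C' :: 'c qstruct) mu. cocone K I D M C' mu \<longrightarrow>
        (\<exists>h. qhom K C C' h \<and> (\<forall>i\<in>I. \<forall>x\<in>qcar (D i). h (lam i x) = mu i x) \<and>
             (\<forall>h'. qhom K C C' h' \<and> (\<forall>i\<in>I. \<forall>x\<in>qcar (D i). h' (lam i x) = mu i x)
                   \<longrightarrow> (\<forall>y\<in>qcar C. h' y = h y))))"

end

theory Submission
  imports Defs
begin

(* A colimit C has no proper subobject containing the images of the colimit injections: the
  injections factor through such a subobject, and the resulting endomorphism of C fixes the
  injections, so it is the identity.  In the unital case the elements below the unit e form
  such a subobject (a locale's top is its unit, so every injection lands below e); hence the
  top of C lies below e and equals it.  In the strong case the elements on which the top t acts
  neutrally from both sides form such a subobject (t x = x = x t in a locale, and t is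
  preserved); hence t is a unit of C. *)

lemma qorder_refl: "qorder Q \<Longrightarrow> a \<in> qcar Q \<Longrightarrow> qle Q a a"
  unfolding qorder_def by blast

lemma qorder_antisym:
  "qorder Q \<Longrightarrow> a \<in> qcar Q \<Longrightarrow> b \<in> qcar Q \<Longrightarrow> qle Q a b \<Longrightarrow> qle Q b a \<Longrightarrow> a = b"
  unfolding qorder_def by blast

lemma qorder_trans:
  "qorder Q \<Longrightarrow> a \<in> qcar Q \<Longrightarrow> b \<in> qcar Q \<Longrightarrow> c \<in> qcar Q \<Longrightarrow> qle Q a b \<Longrightarrow> qle Q b c
    \<Longrightarrow> qle Q a c"
  unfolding qorder_def by blast

lemma qorder_restrict:
  assumes "qorder Q" "S \<subseteq> qcar Q"
  shows "qorder (Q\<lparr>qcar := S\<rparr>)"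
  unfolding qorder_def
  using qorder_refl[OF assms(1)] qorder_antisym[OF assms(1)] qorder_trans[OF assms(1)] assms(2)
  by (simp (no_asm)) blast

lemma is_lub_unique: "qorder Q \<Longrightarrow> is_lub Q A x \<Longrightarrow> is_lub Q A y \<Longrightarrow> x = y"
  unfolding is_lub_def by (blast intro: qorder_antisym)

lemma is_glb_unique: "qorder Q \<Longrightarrow> is_glb Q A x \<Longrightarrow> is_glb Q A y \<Longrightarrow> x = y"
  unfolding is_glb_def by (blast intro: qorder_antisym)

lemma qSup_eq: "qorder Q \<Longrightarrow> is_lub Q A x \<Longrightarrow> qSup Q A = x"
  unfolding qSup_def by (rule the_equality, assumption, rule is_lub_unique)

lemma complete_lat_qorder: "complete_lat Q \<Longrightarrow> qorder Q"
  unfolding complete_lat_def by (rule conjunct1)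

lemma is_lub_qSup:
  assumes "complete_lat Q" "A \<subseteq> qcar Q"
  shows "is_lub Q A (qSup Q A)"
proof -
  obtain x where x: "is_lub Q A x"
    using assms unfolding complete_lat_def by blast
  then show ?thesis
    using qSup_eq[OF complete_lat_qorder[OF assms(1)] x] by simp
qed

lemma qSup_closed: "complete_lat Q \<Longrightarrow> A \<subseteq> qcar Q \<Longrightarrow> qSup Q A \<in> qcar Q"
  by (drule (1) is_lub_qSup) (simp add: is_lub_def)

lemma qSup_upper: "complete_lat Q \<Longrightarrow> A \<subseteq> qcar Q \<Longrightarrow> a \<in> A \<Longrightarrow> qle Q a (qSup Q A)"
  by (drule (1) is_lub_qSup) (simp add: is_lub_def)

lemma qSup_least:
  assumes "complete_lat Q" "A \<subseteq> qcar Q" "y \<in> qcar Q" "\<And>a. a \<in> A \<Longrightarrow> qle Q a y"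
  shows "qle Q (qSup Q A) y"
  using is_lub_qSup[OF assms(1,2)] assms(3,4) unfolding is_lub_def by blast

lemma qtop_closed: "complete_lat Q \<Longrightarrow> qtop Q \<in> qcar Q"
  unfolding qtop_def by (simp add: qSup_closed)

lemma qtop_greatest: "complete_lat Q \<Longrightarrow> a \<in> qcar Q \<Longrightarrow> qle Q a (qtop Q)"
  unfolding qtop_def by (simp add: qSup_upper)

lemma qSup_eq_qtop: "complete_lat Q \<Longrightarrow> S \<subseteq> qcar Q \<Longrightarrow> qtop Q \<in> S \<Longrightarrow> qSup Q S = qtop Q"
  by (intro qSup_eq complete_lat_qorder) (auto simp: is_lub_def qtop_closed qtop_greatest)

lemma qSup_pair_of_le:
  "complete_lat Q \<Longrightarrow> x \<in> qcar Q \<Longrightarrow> y \<in> qcar Q \<Longrightarrow> qle Q x y \<Longrightarrow> qSup Q {x, y} = y"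
  by (rule qSup_eq) (auto simp: is_lub_def complete_lat_qorder qorder_refl)

lemma qSup_preserving_mono:
  assumes "complete_lat Q" "complete_lat R" "f ` qcar Q \<subseteq> qcar R"
    and "\<And>A. A \<subseteq> qcar Q \<Longrightarrow> f (qSup Q A) = qSup R (f ` A)"
    and "x \<in> qcar Q" "y \<in> qcar Q" "qle Q x y"
  shows "qle R (f x) (f y)"
proof -
  have "f y = qSup R {f x, f y}"
    using assms(4)[of "{x, y}"] qSup_pair_of_le[OF assms(1,5,6,7)] assms(5,6) by simp
  then show ?thesis
    using qSup_upper[OF assms(2), of "{f x, f y}" "f x"] assms(3,5,6) by auto
qed

lemma qSup_restrict:
  assumes "complete_lat Q" "S \<subseteq> qcar Q" "\<And>A. A \<subseteq> S \<Longrightarrow> qSup Q A \<in> S" "A \<subseteq> S"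
  shows "qSup (Q\<lparr>qcar := S\<rparr>) A = qSup Q A"
proof (rule qSup_eq)
  show "qorder (Q\<lparr>qcar := S\<rparr>)"
    using assms(1,2) by (simp add: complete_lat_qorder qorder_restrict)
  show "is_lub (Q\<lparr>qcar := S\<rparr>) A (qSup Q A)"
    using is_lub_qSup[OF assms(1), of A] assms(2-4) unfolding is_lub_def by auto
qed

lemma complete_lat_restrict:
  assumes "complete_lat Q" "S \<subseteq> qcar Q" "\<And>A. A \<subseteq> S \<Longrightarrow> qSup Q A \<in> S"
  shows "complete_lat (Q\<lparr>qcar := S\<rparr>)"
  unfolding complete_lat_def
proof (intro conjI allI impI)
  show "qorder (Q\<lparr>qcar := S\<rparr>)"
    using assms(1,2) by (simp add: complete_lat_qorder qorder_restrict)
  fix A assume "A \<subseteq> qcar (Q\<lparr>qcar := S\<rparr>)"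
  then have "is_lub Q A (qSup Q A)" "qSup Q A \<in> S"
    using is_lub_qSup[OF assms(1)] assms(2,3) by auto
  then have "is_lub (Q\<lparr>qcar := S\<rparr>) A (qSup Q A)"
    unfolding is_lub_def using assms(2) by auto
  then show "\<exists>x. is_lub (Q\<lparr>qcar := S\<rparr>) A x" ..
qed

lemma quantale_complete_lat: "quantale Q \<Longrightarrow> complete_lat Q"
  unfolding quantale_def by (rule conjunct1)

lemma quantale_mul_closed: "quantale Q \<Longrightarrow> a \<in> qcar Q \<Longrightarrow> b \<in> qcar Q \<Longrightarrow> qmul Q a b \<in> qcar Q"
  unfolding quantale_def by blast

lemma quantale_mul_assoc:
  "quantale Q \<Longrightarrow> a \<in> qcar Q \<Longrightarrow> b \<in> qcar Q \<Longrightarrow> c \<in> qcar Q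
    \<Longrightarrow> qmul Q (qmul Q a b) c = qmul Q a (qmul Q b c)"
  unfolding quantale_def by blast

lemma quantale_mul_qSup_left:
  "quantale Q \<Longrightarrow> a \<in> qcar Q \<Longrightarrow> B \<subseteq> qcar Q \<Longrightarrow> qmul Q a (qSup Q B) = qSup Q (qmul Q a ` B)"
  unfolding quantale_def by blast

lemma quantale_mul_qSup_right:
  "quantale Q \<Longrightarrow> a \<in> qcar Q \<Longrightarrow> B \<subseteq> qcar Q
    \<Longrightarrow> qmul Q (qSup Q B) a = qSup Q ((\<lambda>b. qmul Q b a) ` B)"
  unfolding quantale_def by blast

lemma quantale_mul_mono_right:
  assumes "quantale Q" "a \<in> qcar Q" "b \<in> qcar Q" "c \<in> qcar Q" "qle Q b c"
  shows "qle Q (qmul Q a b) (qmul Q a c)"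
  using assms quantale_complete_lat
  by (intro qSup_preserving_mono[where f = "qmul Q a"])
    (auto simp: quantale_mul_closed quantale_mul_qSup_left)

lemma involutive_quantale_quantale: "involutive_quantale Q \<Longrightarrow> quantale Q"
  unfolding involutive_quantale_def by (rule conjunct1)

lemma qinv_closed: "involutive_quantale Q \<Longrightarrow> a \<in> qcar Q \<Longrightarrow> qinv Q a \<in> qcar Q"
  unfolding involutive_quantale_def by blast

lemma qinv_qinv: "involutive_quantale Q \<Longrightarrow> a \<in> qcar Q \<Longrightarrow> qinv Q (qinv Q a) = a"
  unfolding involutive_quantale_def by blast

lemma qinv_qmul:
  "involutive_quantale Q \<Longrightarrow> a \<in> qcar Q \<Longrightarrow> b \<in> qcar Q
    \<Longrightarrow> qinv Q (qmul Q a b) = qmul Q (qinv Q b) (qinv Q a)"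
  unfolding involutive_quantale_def by blast

lemma qinv_qSup: "involutive_quantale Q \<Longrightarrow> A \<subseteq> qcar Q \<Longrightarrow> qinv Q (qSup Q A) = qSup Q (qinv Q ` A)"
  unfolding involutive_quantale_def by blast

lemma qinv_mono:
  assumes "involutive_quantale Q" "a \<in> qcar Q" "b \<in> qcar Q" "qle Q a b"
  shows "qle Q (qinv Q a) (qinv Q b)"
  using assms quantale_complete_lat[OF involutive_quantale_quantale[OF assms(1)]]
  by (intro qSup_preserving_mono[where f = "qinv Q"]) (auto simp: qinv_closed qinv_qSup)

lemma qinv_qtop: "involutive_quantale Q \<Longrightarrow> qinv Q (qtop Q) = qtop Q"
proof -
  assume Q: "involutive_quantale Q"
  have "qinv Q ` qcar Q = qcar Q"
    using qinv_closed[OF Q] qinv_qinv[OF Q] by (force intro: image_eqI)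
  then show ?thesis
    unfolding qtop_def by (simp add: qinv_qSup[OF Q])
qed

lemma qinv_unit: "involutive_quantale Q \<Longrightarrow> is_unit_elem Q e \<Longrightarrow> qinv Q e = e"
  by (metis is_unit_elem_def qinv_closed qinv_qinv qinv_qmul)

lemma locale_complete_lat: "is_locale L \<Longrightarrow> complete_lat L"
  unfolding is_locale_def
  by (blast intro: quantale_complete_lat involutive_quantale_quantale)

lemma locale_qtop_mul:
  assumes L: "is_locale L" and x: "x \<in> qcar L"
  shows "qmul L (qtop L) x = x" "qmul L x (qtop L) = x"
proof -
  have cl: "complete_lat L" by (rule locale_complete_lat[OF L])
  have t: "qtop L \<in> qcar L" "qle L x (qtop L)"
    using qtop_closed[OF cl] qtop_greatest[OF cl x] by auto
  have "is_glb L {qtop L, x} x"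
    using t x qorder_refl[OF complete_lat_qorder[OF cl] x] unfolding is_glb_def by auto
  moreover have "is_glb L {qtop L, x} (qmul L (qtop L) x)" "is_glb L {x, qtop L} (qmul L x (qtop L))"
    using L t(1) x unfolding is_locale_def by blast+
  ultimately show "qmul L (qtop L) x = x" "qmul L x (qtop L) = x"
    using is_glb_unique[OF complete_lat_qorder[OF cl]] by (metis insert_commute)+
qed

definition inv_subquantale :: "'a qstruct \<Rightarrow> 'a set \<Rightarrow> bool" where
  "inv_subquantale Q S \<longleftrightarrow> S \<subseteq> qcar Q \<and> (\<forall>A \<subseteq> S. qSup Q A \<in> S) \<and>
     (\<forall>a\<in>S. \<forall>b\<in>S. qmul Q a b \<in> S) \<and> (\<forall>a\<in>S. qinv Q a \<in> S)"

definition sub_qobj :: "qcat \<Rightarrow> 'a qstruct \<Rightarrow> 'a set \<Rightarrow> bool" where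
  "sub_qobj K Q S \<longleftrightarrow> inv_subquantale Q S \<and>
     (case K of UnitalInvQ \<Rightarrow> qunit Q \<in> S | StrongInvQ \<Rightarrow> qtop Q \<in> S)"

lemma involutive_quantale_restrict:
  assumes Q: "involutive_quantale Q" and S: "inv_subquantale Q S"
  shows "involutive_quantale (Q\<lparr>qcar := S\<rparr>)"
proof -
  have q: "quantale Q" by (rule involutive_quantale_quantale[OF Q])
  have cl: "complete_lat Q" by (rule quantale_complete_lat[OF q])
  have sub: "S \<subseteq> qcar Q" and sup: "\<And>A. A \<subseteq> S \<Longrightarrow> qSup Q A \<in> S"
    and mul: "\<And>a b. a \<in> S \<Longrightarrow> b \<in> S \<Longrightarrow> qmul Q a b \<in> S"
    and inv: "\<And>a. a \<in> S \<Longrightarrow> qinv Q a \<in> S"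
    using S unfolding inv_subquantale_def by blast+
  note qSup_S = qSup_restrict[OF cl sub sup]
  have "quantale (Q\<lparr>qcar := S\<rparr>)"
    unfolding quantale_def
  proof (intro conjI ballI allI impI)
    show "complete_lat (Q\<lparr>qcar := S\<rparr>)" by (rule complete_lat_restrict[OF cl sub sup])
    fix a assume a: "a \<in> qcar (Q\<lparr>qcar := S\<rparr>)"
    {
      fix b assume "b \<in> qcar (Q\<lparr>qcar := S\<rparr>)"
      then show "qmul (Q\<lparr>qcar := S\<rparr>) a b \<in> qcar (Q\<lparr>qcar := S\<rparr>)" using a mul by simp
      fix c assume "c \<in> qcar (Q\<lparr>qcar := S\<rparr>)"
      then show "qmul (Q\<lparr>qcar := S\<rparr>) (qmul (Q\<lparr>qcar := S\<rparr>) a b) c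
          = qmul (Q\<lparr>qcar := S\<rparr>) a (qmul (Q\<lparr>qcar := S\<rparr>) b c)"
        using a \<open>b \<in> _\<close> by (simp add: quantale_mul_assoc[OF q] subsetD[OF sub])
    }
    fix B assume B: "B \<subseteq> qcar (Q\<lparr>qcar := S\<rparr>)"
    have "qmul Q a ` B \<subseteq> S" "(\<lambda>b. qmul Q b a) ` B \<subseteq> S" using a B mul by auto
    moreover have "a \<in> qcar Q" "B \<subseteq> qcar Q" using a B sub by auto
    ultimately show "qmul (Q\<lparr>qcar := S\<rparr>) a (qSup (Q\<lparr>qcar := S\<rparr>) B)
          = qSup (Q\<lparr>qcar := S\<rparr>) ((\<lambda>b. qmul (Q\<lparr>qcar := S\<rparr>) a b) ` B)"
      "qmul (Q\<lparr>qcar := S\<rparr>) (qSup (Q\<lparr>qcar := S\<rparr>) B) a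
          = qSup (Q\<lparr>qcar := S\<rparr>) ((\<lambda>b. qmul (Q\<lparr>qcar := S\<rparr>) b a) ` B)"
      using B by (simp_all add: qSup_S quantale_mul_qSup_left[OF q] quantale_mul_qSup_right[OF q])
  qed
  moreover have "qinv Q ` A \<subseteq> S" if "A \<subseteq> S" for A
    using that inv by auto
  ultimately show ?thesis
    unfolding involutive_quantale_def
    using inv qSup_S
    by (auto simp: qinv_qinv[OF Q] qinv_qmul[OF Q] qinv_qSup[OF Q] subsetD[OF sub] order_trans[OF _ sub]
        simp del: image_subset_iff)
qed

lemma qtop_restrict:
  assumes "complete_lat Q" "inv_subquantale Q S" "qtop Q \<in> S"
  shows "qtop (Q\<lparr>qcar := S\<rparr>) = qtop Q"
  using assms unfolding qtop_def inv_subquantale_def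
  by (simp add: qSup_restrict qSup_eq_qtop[unfolded qtop_def])

lemma qobj_complete_lat: "qobj K Q \<Longrightarrow> complete_lat Q"
  unfolding qobj_def by (blast intro: quantale_complete_lat involutive_quantale_quantale)

lemma qobj_restrict:
  assumes Q: "qobj K Q" and S: "sub_qobj K Q S"
  shows "qobj K (Q\<lparr>qcar := S\<rparr>)"
proof -
  have sub: "S \<subseteq> qcar Q"
    using S unfolding sub_qobj_def inv_subquantale_def by blast
  have "involutive_quantale (Q\<lparr>qcar := S\<rparr>)"
    using Q S unfolding qobj_def sub_qobj_def by (blast intro: involutive_quantale_restrict)
  moreover have "unital (Q\<lparr>qcar := S\<rparr>)" if "K = UnitalInvQ"
    using Q S that subsetD[OF sub] unfolding qobj_def sub_qobj_def unital_def is_unit_elem_def by auto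
  moreover have "strong (Q\<lparr>qcar := S\<rparr>)" if "K = StrongInvQ"
    using Q S that qtop_restrict[OF qobj_complete_lat[OF Q]]
    unfolding qobj_def sub_qobj_def strong_def by auto
  ultimately show ?thesis
    unfolding qobj_def by (cases K) simp_all
qed

lemma qhom_restrict_iff:
  assumes R: "qobj K R" and S: "sub_qobj K R S"
  shows "qhom K Q (R\<lparr>qcar := S\<rparr>) f \<longleftrightarrow> qhom K Q R f \<and> f ` qcar Q \<subseteq> S"
proof -
  have cl: "complete_lat R" by (rule qobj_complete_lat[OF R])
  have sub: "S \<subseteq> qcar R" and sup: "\<And>A. A \<subseteq> S \<Longrightarrow> qSup R A \<in> S"
    using S unfolding sub_qobj_def inv_subquantale_def by blast+
  have top: "qtop (R\<lparr>qcar := S\<rparr>) = qtop R" if "K = StrongInvQ"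
    using S that qtop_restrict[OF cl] unfolding sub_qobj_def by auto
  have "f (qSup Q A) = qSup (R\<lparr>qcar := S\<rparr>) (f ` A) \<longleftrightarrow> f (qSup Q A) = qSup R (f ` A)"
    if "f ` qcar Q \<subseteq> S" "A \<subseteq> qcar Q" for A
  proof -
    have "f ` A \<subseteq> S" using that by blast
    then show ?thesis by (simp add: qSup_restrict[OF cl sub sup])
  qed
  then show ?thesis
    using sub top unfolding qhom_def by (cases K) auto
qed

lemma qhom_closed: "qhom K Q R f \<Longrightarrow> x \<in> qcar Q \<Longrightarrow> f x \<in> qcar R"
  unfolding qhom_def by blast

lemma qhom_id: "qhom K Q Q id"
  unfolding qhom_def by (cases K) simp_all

lemma colimit_cocone: "is_colimit K I D M C lam \<Longrightarrow> cocone K I D M C lam"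
  unfolding is_colimit_def by (rule conjunct1)

lemma colimit_endo_eq_id:
  assumes col: "is_colimit K I D M C lam" and h: "qhom K C C h"
    and h_lam: "\<And>i x. i \<in> I \<Longrightarrow> x \<in> qcar (D i) \<Longrightarrow> h (lam i x) = lam i x"
    and y: "y \<in> qcar C"
  shows "h y = y"
proof -
  obtain h0 where unique: "\<And>h'. qhom K C C h' \<Longrightarrow> \<forall>i\<in>I. \<forall>x\<in>qcar (D i). h' (lam i x) = lam i x
      \<Longrightarrow> \<forall>y\<in>qcar C. h' y = h0 y"
    using col colimit_cocone[OF col] unfolding is_colimit_def by blast
  have "h y = h0 y" using unique[OF h] h_lam y by blast
  moreover have "id y = h0 y" using unique[OF qhom_id] y by simp
  ultimately show ?thesis by simp
qed

lemma colimit_generated_by_injections: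
  assumes col: "is_colimit K I D M C lam" and S: "sub_qobj K C S"
    and lam_S: "\<And>i x. i \<in> I \<Longrightarrow> x \<in> qcar (D i) \<Longrightarrow> lam i x \<in> S"
  shows "qcar C \<subseteq> S"
proof
  fix y assume y: "y \<in> qcar C"
  have cc: "cocone K I D M C lam" by (rule colimit_cocone[OF col])
  then have C: "qobj K C" unfolding cocone_def by blast
  have "cocone K I D M (C\<lparr>qcar := S\<rparr>) lam"
    using cc lam_S unfolding cocone_def by (auto simp: qobj_restrict[OF C S] qhom_restrict_iff[OF C S])
  then obtain h where h: "qhom K C (C\<lparr>qcar := S\<rparr>) h"
    and h_lam: "\<forall>i\<in>I. \<forall>x\<in>qcar (D i). h (lam i x) = lam i x"
    using col unfolding is_colimit_def by blast
  have "qhom K C C h" "h ` qcar C \<subseteq> S" using h by (simp_all add: qhom_restrict_iff[OF C S])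
  then show "y \<in> S"
    using colimit_endo_eq_id[OF col _ _ y] h_lam y by (metis image_subset_iff)
qed

lemma sub_qobj_below_unit:
  assumes Q: "involutive_quantale Q" and u: "unital Q"
  shows "sub_qobj UnitalInvQ Q {a \<in> qcar Q. qle Q a (qunit Q)}"
proof -
  let ?e = "qunit Q" and ?S = "{a \<in> qcar Q. qle Q a (qunit Q)}"
  have q: "quantale Q" by (rule involutive_quantale_quantale[OF Q])
  have cl: "complete_lat Q" by (rule quantale_complete_lat[OF q])
  have ord: "qorder Q" by (rule complete_lat_qorder[OF cl])
  have e: "is_unit_elem Q ?e" using u unfolding unital_def .
  then have eQ: "?e \<in> qcar Q" and a_e: "\<And>a. a \<in> qcar Q \<Longrightarrow> qmul Q a ?e = a"
    unfolding is_unit_elem_def by auto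
  have "qSup Q A \<in> ?S" if "A \<subseteq> ?S" for A
  proof -
    have "A \<subseteq> qcar Q" using that by blast
    then show ?thesis
      using that qSup_closed[OF cl] qSup_least[OF cl _ eQ] by blast
  qed
  moreover have "qmul Q a b \<in> ?S" if "a \<in> ?S" "b \<in> ?S" for a b
  proof -
    have a: "a \<in> qcar Q" "qle Q a ?e" and b: "b \<in> qcar Q" "qle Q b ?e" using that by auto
    have ab: "qmul Q a b \<in> qcar Q" by (rule quantale_mul_closed[OF q a(1) b(1)])
    have "qle Q (qmul Q a b) (qmul Q a ?e)"
      by (rule quantale_mul_mono_right[OF q a(1) b(1) eQ b(2)])
    then have "qle Q (qmul Q a b) a" by (simp add: a_e[OF a(1)])
    then have "qle Q (qmul Q a b) ?e" by (rule qorder_trans[OF ord ab a(1) eQ _ a(2)])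
    then show ?thesis using ab by simp
  qed
  moreover have "qinv Q a \<in> ?S" if "a \<in> ?S" for a
  proof -
    have a: "a \<in> qcar Q" "qle Q a ?e" using that by auto
    have "qle Q (qinv Q a) (qinv Q ?e)" by (rule qinv_mono[OF Q a(1) eQ a(2)])
    then show ?thesis using qinv_closed[OF Q a(1)] qinv_unit[OF Q e] by simp
  qed
  ultimately show ?thesis
    unfolding sub_qobj_def inv_subquantale_def using eQ qorder_refl[OF ord eQ] by auto
qed

lemma unital_qhom_from_locale_le_unit:
  assumes L: "is_locale L" and Q: "quantale Q" and f: "qhom UnitalInvQ L Q f"
    and x: "x \<in> qcar L"
  shows "qle Q (f x) (qunit Q)"
proof -
  have cl: "complete_lat L" by (rule locale_complete_lat[OF L])
  have "qle Q (f x) (f (qtop L))"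
    using f unfolding qhom_def
    by (intro qSup_preserving_mono[OF cl quantale_complete_lat[OF Q] _ _ x qtop_closed[OF cl]
          qtop_greatest[OF cl x]]) auto
  moreover have "f (qtop L) = qunit Q"
    using f L unfolding qhom_def is_locale_def by simp
  ultimately show ?thesis by simp
qed

lemma sub_qobj_qtop_neutral:
  assumes Q: "involutive_quantale Q" and s: "strong Q"
  shows "sub_qobj StrongInvQ Q {a \<in> qcar Q. qmul Q (qtop Q) a = a \<and> qmul Q a (qtop Q) = a}"
proof -
  let ?t = "qtop Q" and ?S = "{a \<in> qcar Q. qmul Q (qtop Q) a = a \<and> qmul Q a (qtop Q) = a}"
  have q: "quantale Q" by (rule involutive_quantale_quantale[OF Q])
  have cl: "complete_lat Q" by (rule quantale_complete_lat[OF q])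
  have tQ: "?t \<in> qcar Q" by (rule qtop_closed[OF cl])
  have "qSup Q A \<in> ?S" if A: "A \<subseteq> ?S" for A
  proof -
    have AQ: "A \<subseteq> qcar Q" using A by blast
    have "qmul Q ?t ` A = A" "(\<lambda>b. qmul Q b ?t) ` A = A"
      using A by (force simp: image_iff)+
    then show ?thesis
      using qSup_closed[OF cl AQ] quantale_mul_qSup_left[OF q tQ AQ]
        quantale_mul_qSup_right[OF q tQ AQ]
      by simp
  qed
  moreover have "qmul Q a b \<in> ?S" if "a \<in> ?S" "b \<in> ?S" for a b
  proof -
    have a: "a \<in> qcar Q" "qmul Q ?t a = a" and b: "b \<in> qcar Q" "qmul Q b ?t = b"
      using that by auto
    show ?thesis
      using quantale_mul_closed[OF q a(1) b(1)] quantale_mul_assoc[OF q tQ a(1) b(1)]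
        quantale_mul_assoc[OF q a(1) b(1) tQ] a(2) b(2)
      by simp
  qed
  moreover have "qinv Q a \<in> ?S" if "a \<in> ?S" for a
  proof -
    have a: "a \<in> qcar Q" "qmul Q ?t a = a" "qmul Q a ?t = a" using that by auto
    show ?thesis
      using qinv_closed[OF Q a(1)] qinv_qmul[OF Q a(1) tQ] qinv_qmul[OF Q tQ a(1)] qinv_qtop[OF Q]
        a(2,3)
      by simp
  qed
  moreover have "?t \<in> ?S"
    using tQ s unfolding strong_def by simp
  ultimately show ?thesis
    unfolding sub_qobj_def inv_subquantale_def by auto
qed

lemma strong_qhom_from_locale_qtop_mul:
  assumes L: "is_locale L" and f: "qhom StrongInvQ L Q f" and x: "x \<in> qcar L"
  shows "qmul Q (qtop Q) (f x) = f x" "qmul Q (f x) (qtop Q) = f x"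
proof -
  have tL: "qtop L \<in> qcar L" by (rule qtop_closed[OF locale_complete_lat[OF L]])
  have f_mul: "f (qmul L a b) = qmul Q (f a) (f b)" if "a \<in> qcar L" "b \<in> qcar L" for a b
    using f that unfolding qhom_def by blast
  have f_top: "f (qtop L) = qtop Q"
    using f unfolding qhom_def by simp
  show "qmul Q (qtop Q) (f x) = f x" "qmul Q (f x) (qtop Q) = f x"
    using f_mul[OF tL x] f_mul[OF x tL] locale_qtop_mul[OF L x] f_top by simp_all
qed

lemma unital_colimit_of_locales_qtop_unit:
  assumes locales: "\<And>i. i \<in> I \<Longrightarrow> is_locale (D i)"
    and col: "is_colimit UnitalInvQ I D M C lam"
  shows "is_unit_elem C (qtop C)"
proof -
  let ?S = "{a \<in> qcar C. qle C a (qunit C)}"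
  have C: "involutive_quantale C" "unital C"
    and lam: "\<And>i. i \<in> I \<Longrightarrow> qhom UnitalInvQ (D i) C (lam i)"
    using colimit_cocone[OF col] unfolding cocone_def qobj_def by auto
  have q: "quantale C" by (rule involutive_quantale_quantale[OF C(1)])
  have cl: "complete_lat C" by (rule quantale_complete_lat[OF q])
  have "qcar C \<subseteq> ?S"
  proof (rule colimit_generated_by_injections[OF col sub_qobj_below_unit[OF C]])
    fix i x assume i: "i \<in> I" and x: "x \<in> qcar (D i)"
    show "lam i x \<in> ?S"
      using qhom_closed[OF lam[OF i] x] unital_qhom_from_locale_le_unit[OF locales[OF i] q lam[OF i] x]
      by simp
  qed
  then have top_le: "qle C (qtop C) (qunit C)"
    using qtop_closed[OF cl] by auto
  have e: "qunit C \<in> qcar C"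
    using C(2) unfolding unital_def is_unit_elem_def by blast
  have "qtop C = qunit C"
    by (rule qorder_antisym[OF complete_lat_qorder[OF cl] qtop_closed[OF cl] e top_le
          qtop_greatest[OF cl e]])
  then show ?thesis using C(2) unfolding unital_def by simp
qed

lemma strong_colimit_of_locales_qtop_unit:
  assumes locales: "\<And>i. i \<in> I \<Longrightarrow> is_locale (D i)"
    and col: "is_colimit StrongInvQ I D M C lam"
  shows "is_unit_elem C (qtop C)"
proof -
  let ?S = "{a \<in> qcar C. qmul C (qtop C) a = a \<and> qmul C a (qtop C) = a}"
  have C: "involutive_quantale C" "strong C"
    and lam: "\<And>i. i \<in> I \<Longrightarrow> qhom StrongInvQ (D i) C (lam i)"
    using colimit_cocone[OF col] unfolding cocone_def qobj_def by auto
  have "qcar C \<subseteq> ?S"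
  proof (rule colimit_generated_by_injections[OF col sub_qobj_qtop_neutral[OF C]])
    fix i x assume i: "i \<in> I" and x: "x \<in> qcar (D i)"
    show "lam i x \<in> ?S"
      using qhom_closed[OF lam[OF i] x] strong_qhom_from_locale_qtop_mul[OF locales[OF i] lam[OF i] x]
      by simp
  qed
  then show ?thesis
    unfolding is_unit_elem_def
    using qtop_closed[OF quantale_complete_lat[OF involutive_quantale_quantale[OF C(1)]]] by auto
qed

theorem corollary4p2:
  fixes K :: qcat
    and I :: "'i set"
    and D :: "'i \<Rightarrow> 'a qstruct"
    and M :: "('i \<times> 'i \<times> ('a \<Rightarrow> 'a)) set"
    and C :: "'c qstruct"
    and lam :: "'i \<Rightarrow> 'a \<Rightarrow> 'c"
  assumes "locale_diagram K I D M"
    and "is_colimit K I D M C lam"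
  shows "strictly_two_sided C"
proof -
  have locales: "\<And>i. i \<in> I \<Longrightarrow> is_locale (D i)"
    using assms(1) unfolding locale_diagram_def by blast
  have "quantale C"
    using colimit_cocone[OF assms(2)] unfolding cocone_def qobj_def
    by (blast intro: involutive_quantale_quantale)
  moreover have "is_unit_elem C (qtop C)"
    using assms(2) unital_colimit_of_locales_qtop_unit[OF locales]
      strong_colimit_of_locales_qtop_unit[OF locales]
    by (cases K) simp_all
  ultimately show ?thesis
    unfolding strictly_two_sided_def ..
qed

end
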